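(* For all $s,t\in\mathbb{R}$ and $b\ge 0$, $\mathcal{T}_c(\gamma_{s,0},\gamma_{t,b})\le 2\,(|s-t|+e^b-1)$.
   Context: For $t,a\in\mathbb{R}$, $\gamma_{t,a}$ denotes the Gaussian probability measure on $\mathbb{R}$ with mean $t$ and variance $e^{2a}$. For probability measures $\mu,\nu$ on $\mathbb{R}$, $\mathcal{T}_c(\mu,\nu)=\inf_\Pi\int(|x-y|+1_{x\ne y})\,d\Pi(x,y)$, the infimum over all probability measures $\Pi$ on $\mathbb{R}^2$ with first marginal $\mu$ and second marginal $\nu$. *)

theory Defs
  imports "HOL-Probability.Probability"
begin

definition gauss :: "real \<Rightarrow> real \<Rightarrow> real measure" where
  "gauss t a = density lborel (normal_density t (exp a))"

definition couplings :: "real measure \<Rightarrow> real measure \<Rightarrow> (real \<times> real) measure set" where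
  "couplings \<mu> \<nu> = {P. prob_space P \<and> sets P = sets (borel :: (real \<times> real) measure) \<and>
      distr P borel fst = \<mu> \<and> distr P borel snd = \<nu>}"

definition Tc :: "real measure \<Rightarrow> real measure \<Rightarrow> ennreal" where
  "Tc \<mu> \<nu> = (INF P\<in>couplings \<mu> \<nu>.
      \<integral>\<^sup>+ p. ennreal (\<bar>fst p - snd p\<bar> + (if fst p \<noteq> snd p then 1 else 0)) \<partial>P)"

end

(*
  Two couplings suffice. If |s - t| + e^b - 1 >= 1, push N(s, 1) forward by the affine map
  x |-> t + e^b (x - s): its cost is at most 1 + |s - t| + (e^b - 1) E|Z| <= 2 (|s - t| + e^b - 1),
  since E|Z| = sqrt (2 / pi) <= 1.

  Otherwise take a maximal coupling of the densities f and g: the common mass min f g stays on the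
  diagonal and the rest of f is sent independently onto the rest of g. Since
  |x - v| + 1 <= (1/2 + |x - t|) + (1/2 + |v - t|), its cost is at most the L1 distance of f and g
  weighted by 1/2 + |x - t|. Write g - f as the integral over u in [0, 1] of the u-derivative of
  the normal density with mean s + u (t - s) and standard deviation 1 + u (e^b - 1); after the
  substitution x = mean + deviation * z the weighted L1 distance is bounded by absolute moments of
  a standard normal Z. The resulting quadratic bound in |s - t| and e^b - 1 is at most twice their
  sum because 1 / sqrt (2 pi) <= 0.41 and |s - t| + e^b - 1 < 1.
*)

theory Submission
  imports Defs
begin

section \<open>Couplings and the transport cost\<close>

definition transport_cost :: "real \<times> real \<Rightarrow> ennreal" where
  "transport_cost p = ennreal (\<bar>fst p - snd p\<bar> + (if fst p \<noteq> snd p then 1 else 0))"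

lemma borel_measurable_transport_cost[measurable]: "transport_cost \<in> borel_measurable borel"
proof -
  have "transport_cost \<in> borel_measurable (borel \<Otimes>\<^sub>M borel)"
    unfolding transport_cost_def by measurable
  then show ?thesis by (simp add: borel_prod)
qed

lemma transport_cost_diag[simp]: "transport_cost (x, x) = 0"
  by (simp add: transport_cost_def)

lemma borel_measurable_fst_real[measurable]: "fst \<in> borel_measurable (borel :: (real \<times> real) measure)"
  using measurable_fst[of "borel :: real measure" "borel :: real measure"] by (simp add: borel_prod)

lemma borel_measurable_snd_real[measurable]: "snd \<in> borel_measurable (borel :: (real \<times> real) measure)"
  using measurable_snd[of "borel :: real measure" "borel :: real measure"] by (simp add: borel_prod)

lemma Tc_le_coupling_cost: "P \<in> couplings \<mu> \<nu> \<Longrightarrow> Tc \<mu> \<nu> \<le> (\<integral>\<^sup>+p. transport_cost p \<partial>P)"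
  unfolding Tc_def transport_cost_def by (rule INF_lower)

text \<open>The Boolean coordinate selects the component: mass \<open>m x * \<rho> v\<close> stays at \<open>(x, x)\<close>, and mass
  \<open>r x * \<rho> v\<close> is moved from \<open>x\<close> to \<open>v\<close>.\<close>

definition mixture_coupling ::
    "(real \<Rightarrow> ennreal) \<Rightarrow> (real \<Rightarrow> ennreal) \<Rightarrow> (real \<Rightarrow> ennreal) \<Rightarrow> (real \<times> real) measure" where
  "mixture_coupling m r \<rho> =
     distr (density ((lborel \<Otimes>\<^sub>M lborel) \<Otimes>\<^sub>M count_space UNIV)
              (\<lambda>(a, stay). (if stay then m (fst a) else r (fst a)) * \<rho> (snd a)))
       borel (\<lambda>(a, stay). if stay then (fst a, fst a) else a)"

lemma nn_integral_mixture_coupling_iterated: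
  assumes [measurable]: "m \<in> borel_measurable borel" "r \<in> borel_measurable borel"
    "\<rho> \<in> borel_measurable borel" "h \<in> borel_measurable borel"
  shows "(\<integral>\<^sup>+p. h p \<partial>mixture_coupling m r \<rho>) =
    (\<integral>\<^sup>+x. \<integral>\<^sup>+v. m x * \<rho> v * h (x, x) + r x * \<rho> v * h (x, v) \<partial>lborel \<partial>lborel)"
proof -
  define D where "D = (\<lambda>(a, stay). (if stay then m (fst a) else r (fst a)) * \<rho> (snd a))"
  define F where "F = (\<lambda>(a :: real \<times> real, stay). if stay then (fst a, fst a) else a)"
  have [measurable]: "h \<in> borel_measurable (borel \<Otimes>\<^sub>M borel)"
    using assms(4) by (simp add: borel_prod)
  have [measurable]: "D \<in> borel_measurable ((lborel \<Otimes>\<^sub>M lborel) \<Otimes>\<^sub>M count_space UNIV)"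
    unfolding D_def by measurable
  have [measurable]: "F \<in> (lborel \<Otimes>\<^sub>M lborel) \<Otimes>\<^sub>M count_space UNIV \<rightarrow>\<^sub>M borel"
    unfolding F_def borel_prod[symmetric] by measurable
  interpret bool: sigma_finite_measure "count_space (UNIV :: bool set)"
    by (rule sigma_finite_measure_count_space_countable) simp
  have "(\<integral>\<^sup>+p. h p \<partial>mixture_coupling m r \<rho>) =
      (\<integral>\<^sup>+\<omega>. D \<omega> * h (F \<omega>) \<partial>((lborel \<Otimes>\<^sub>M lborel) \<Otimes>\<^sub>M count_space UNIV))"
    unfolding mixture_coupling_def D_def[symmetric] F_def[symmetric]
    by (simp add: nn_integral_distr nn_integral_density)
  also have "\<dots> = (\<integral>\<^sup>+a. \<integral>\<^sup>+stay. D (a, stay) * h (F (a, stay)) \<partial>count_space UNIV \<partial>(lborel \<Otimes>\<^sub>M lborel))"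
    by (rule bool.nn_integral_fst[symmetric]) measurable
  also have "\<dots> = (\<integral>\<^sup>+a. m (fst a) * \<rho> (snd a) * h (fst a, fst a) + r (fst a) * \<rho> (snd a) * h a
      \<partial>(lborel \<Otimes>\<^sub>M lborel))"
    by (simp add: D_def F_def nn_integral_count_space_finite UNIV_bool add.commute)
  also have "\<dots> = (\<integral>\<^sup>+x. \<integral>\<^sup>+v. m x * \<rho> v * h (x, x) + r x * \<rho> v * h (x, v) \<partial>lborel \<partial>lborel)"
  proof -
    have "(\<lambda>a. m (fst a) * \<rho> (snd a) * h (fst a, fst a) + r (fst a) * \<rho> (snd a) * h a)
        \<in> borel_measurable (lborel \<Otimes>\<^sub>M lborel)"
      by measurable
    from lborel.nn_integral_fst[OF this] show ?thesis by simp
  qed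
  finally show ?thesis .
qed

lemma nn_integral_mixture_coupling:
  assumes [measurable]: "m \<in> borel_measurable borel" "r \<in> borel_measurable borel"
    "\<rho> \<in> borel_measurable borel" "h \<in> borel_measurable borel"
    and \<rho>1: "(\<integral>\<^sup>+v. \<rho> v \<partial>lborel) = 1"
  shows "(\<integral>\<^sup>+p. h p \<partial>mixture_coupling m r \<rho>) =
    (\<integral>\<^sup>+x. m x * h (x, x) \<partial>lborel) + (\<integral>\<^sup>+x. r x * (\<integral>\<^sup>+v. \<rho> v * h (x, v) \<partial>lborel) \<partial>lborel)"
proof -
  have [measurable]: "h \<in> borel_measurable (borel \<Otimes>\<^sub>M borel)"
    using assms(4) by (simp add: borel_prod)
  have inner: "(\<integral>\<^sup>+v. m x * \<rho> v * h (x, x) + r x * \<rho> v * h (x, v) \<partial>lborel) =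
      m x * h (x, x) + r x * (\<integral>\<^sup>+v. \<rho> v * h (x, v) \<partial>lborel)" for x
  proof -
    have "(\<integral>\<^sup>+v. m x * \<rho> v * h (x, x) + r x * \<rho> v * h (x, v) \<partial>lborel) =
        (\<integral>\<^sup>+v. m x * h (x, x) * \<rho> v \<partial>lborel) + (\<integral>\<^sup>+v. r x * (\<rho> v * h (x, v)) \<partial>lborel)"
      by (subst nn_integral_add[symmetric]) (auto simp: mult_ac)
    also have "\<dots> = m x * h (x, x) + r x * (\<integral>\<^sup>+v. \<rho> v * h (x, v) \<partial>lborel)"
      by (simp add: nn_integral_cmult \<rho>1)
    finally show ?thesis .
  qed
  show ?thesis
    by (simp add: nn_integral_mixture_coupling_iterated inner nn_integral_add)
qed

lemma emeasure_distr_mixture_coupling: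
  assumes [measurable]: "m \<in> borel_measurable borel" "r \<in> borel_measurable borel"
    "\<rho> \<in> borel_measurable borel" "\<pi> \<in> borel_measurable borel" "A \<in> sets borel"
    and \<rho>1: "(\<integral>\<^sup>+v. \<rho> v \<partial>lborel) = 1"
  shows "emeasure (distr (mixture_coupling m r \<rho>) borel \<pi>) A =
    (\<integral>\<^sup>+x. m x * indicator A (\<pi> (x, x)) \<partial>lborel) +
    (\<integral>\<^sup>+x. r x * (\<integral>\<^sup>+v. \<rho> v * indicator A (\<pi> (x, v)) \<partial>lborel) \<partial>lborel)"
proof -
  have [measurable]: "\<pi> \<in> mixture_coupling m r \<rho> \<rightarrow>\<^sub>M borel"
    by (simp add: mixture_coupling_def)
  have "emeasure (distr (mixture_coupling m r \<rho>) borel \<pi>) A =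
      (\<integral>\<^sup>+y. indicator A y \<partial>distr (mixture_coupling m r \<rho>) borel \<pi>)"
    by simp
  also have "\<dots> = (\<integral>\<^sup>+p. indicator A (\<pi> p) \<partial>mixture_coupling m r \<rho>)"
    by (rule nn_integral_distr) measurable
  finally show ?thesis
    by (simp add: nn_integral_mixture_coupling \<rho>1)
qed

lemma mixture_coupling_fst:
  assumes [measurable]: "m \<in> borel_measurable borel" "r \<in> borel_measurable borel"
    "\<rho> \<in> borel_measurable borel"
    and \<rho>1: "(\<integral>\<^sup>+v. \<rho> v \<partial>lborel) = 1"
  shows "distr (mixture_coupling m r \<rho>) borel fst = density lborel (\<lambda>x. m x + r x)"
proof (rule measure_eqI)
  fix A assume "A \<in> sets (distr (mixture_coupling m r \<rho>) borel fst)"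
  then have [measurable]: "A \<in> sets borel" by simp
  have "emeasure (distr (mixture_coupling m r \<rho>) borel fst) A =
      (\<integral>\<^sup>+x. m x * indicator A x \<partial>lborel) + (\<integral>\<^sup>+x. r x * indicator A x \<partial>lborel)"
    by (simp add: emeasure_distr_mixture_coupling \<rho>1 nn_integral_multc mult.assoc)
  also have "\<dots> = emeasure (density lborel (\<lambda>x. m x + r x)) A"
    by (simp add: emeasure_density nn_integral_add distrib_right)
  finally show "emeasure (distr (mixture_coupling m r \<rho>) borel fst) A =
      emeasure (density lborel (\<lambda>x. m x + r x)) A" .
qed simp

lemma mixture_coupling_snd:
  assumes [measurable]: "m \<in> borel_measurable borel" "r \<in> borel_measurable borel"
    "\<rho> \<in> borel_measurable borel"
    and \<rho>1: "(\<integral>\<^sup>+v. \<rho> v \<partial>lborel) = 1"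
  shows "distr (mixture_coupling m r \<rho>) borel snd =
    density lborel (\<lambda>v. m v + (\<integral>\<^sup>+x. r x \<partial>lborel) * \<rho> v)"
proof (rule measure_eqI)
  fix A assume "A \<in> sets (distr (mixture_coupling m r \<rho>) borel snd)"
  then have [measurable]: "A \<in> sets borel" by simp
  have "emeasure (distr (mixture_coupling m r \<rho>) borel snd) A =
      (\<integral>\<^sup>+x. m x * indicator A x \<partial>lborel) +
      (\<integral>\<^sup>+v. (\<integral>\<^sup>+x. r x \<partial>lborel) * \<rho> v * indicator A v \<partial>lborel)"
    by (simp add: emeasure_distr_mixture_coupling \<rho>1 nn_integral_multc nn_integral_cmult mult.assoc)
  also have "\<dots> = emeasure (density lborel (\<lambda>v. m v + (\<integral>\<^sup>+x. r x \<partial>lborel) * \<rho> v)) A"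
    by (simp add: emeasure_density nn_integral_add distrib_right)
  finally show "emeasure (distr (mixture_coupling m r \<rho>) borel snd) A =
      emeasure (density lborel (\<lambda>v. m v + (\<integral>\<^sup>+x. r x \<partial>lborel) * \<rho> v)) A" .
qed simp

lemma mixture_coupling_in_couplings:
  assumes [measurable]: "m \<in> borel_measurable borel" "r \<in> borel_measurable borel"
    "\<rho> \<in> borel_measurable borel"
    and \<rho>1: "(\<integral>\<^sup>+v. \<rho> v \<partial>lborel) = 1" and total: "(\<integral>\<^sup>+x. m x + r x \<partial>lborel) = 1"
  shows "mixture_coupling m r \<rho> \<in> couplings (density lborel (\<lambda>x. m x + r x))
    (density lborel (\<lambda>v. m v + (\<integral>\<^sup>+x. r x \<partial>lborel) * \<rho> v))"
proof -
  let ?P = "mixture_coupling m r \<rho>"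
  have "emeasure ?P (space ?P) = emeasure (distr ?P borel fst) UNIV"
    by (simp add: emeasure_distr mixture_coupling_def)
  also have "\<dots> = 1"
    by (simp add: mixture_coupling_fst \<rho>1 emeasure_density total)
  finally have "prob_space ?P" by (rule prob_spaceI)
  then show ?thesis
    by (simp add: couplings_def mixture_coupling_fst mixture_coupling_snd \<rho>1)
      (simp add: mixture_coupling_def)
qed

lemma mixture_coupling_cost_le:
  assumes [measurable]: "m \<in> borel_measurable borel" "r \<in> borel_measurable borel"
    "\<rho> \<in> borel_measurable borel" "w \<in> borel_measurable borel"
    and \<rho>1: "(\<integral>\<^sup>+v. \<rho> v \<partial>lborel) = 1"
    and cost: "\<And>x v. transport_cost (x, v) \<le> w x + w v"
  shows "(\<integral>\<^sup>+p. transport_cost p \<partial>mixture_coupling m r \<rho>) \<le>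
    (\<integral>\<^sup>+x. r x * w x \<partial>lborel) + (\<integral>\<^sup>+x. r x \<partial>lborel) * (\<integral>\<^sup>+v. \<rho> v * w v \<partial>lborel)"
proof -
  have "(\<integral>\<^sup>+p. transport_cost p \<partial>mixture_coupling m r \<rho>) =
      (\<integral>\<^sup>+x. r x * (\<integral>\<^sup>+v. \<rho> v * transport_cost (x, v) \<partial>lborel) \<partial>lborel)"
    by (simp add: nn_integral_mixture_coupling \<rho>1)
  also have "\<dots> \<le> (\<integral>\<^sup>+x. r x * (\<integral>\<^sup>+v. w x * \<rho> v + \<rho> v * w v \<partial>lborel) \<partial>lborel)"
  proof (intro nn_integral_mono mult_left_mono order_refl)
    fix x v
    show "\<rho> v * transport_cost (x, v) \<le> w x * \<rho> v + \<rho> v * w v"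
      using mult_left_mono[OF cost, of "\<rho> v" x v] by (simp add: distrib_left mult.commute)
  qed simp
  also have "\<dots> = (\<integral>\<^sup>+x. r x * w x + r x * (\<integral>\<^sup>+v. \<rho> v * w v \<partial>lborel) \<partial>lborel)"
    by (simp add: nn_integral_add nn_integral_cmult \<rho>1 distrib_left)
  also have "\<dots> = (\<integral>\<^sup>+x. r x * w x \<partial>lborel) + (\<integral>\<^sup>+x. r x \<partial>lborel) * (\<integral>\<^sup>+v. \<rho> v * w v \<partial>lborel)"
    by (simp add: nn_integral_add nn_integral_multc)
  finally show ?thesis .
qed

lemma nn_integral_excess_over_min:
  fixes f g :: "real \<Rightarrow> real"
  assumes [measurable]: "f \<in> borel_measurable borel" "g \<in> borel_measurable borel"
    and f0: "\<And>x. 0 \<le> f x" and g0: "\<And>x. 0 \<le> g x"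
    and f1: "(\<integral>\<^sup>+x. f x \<partial>lborel) = 1" and g1: "(\<integral>\<^sup>+x. g x \<partial>lborel) = 1"
  shows "(\<integral>\<^sup>+x. ennreal (f x - min (f x) (g x)) \<partial>lborel) = (\<integral>\<^sup>+x. ennreal (g x - min (f x) (g x)) \<partial>lborel)"
    and "(\<integral>\<^sup>+x. ennreal (f x - min (f x) (g x)) \<partial>lborel) \<noteq> \<infinity>"
proof -
  let ?m = "\<lambda>x. ennreal (min (f x) (g x))"
  have f_split: "ennreal (f x) = ?m x + ennreal (f x - min (f x) (g x))"
    and g_split: "ennreal (g x) = ?m x + ennreal (g x - min (f x) (g x))" for x
    using f0[of x] g0[of x] by (simp_all add: ennreal_plus[symmetric] del: ennreal_plus)
  have sum: "(\<integral>\<^sup>+x. ?m x \<partial>lborel) + (\<integral>\<^sup>+x. ennreal (f x - min (f x) (g x)) \<partial>lborel) = 1"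
    "(\<integral>\<^sup>+x. ?m x \<partial>lborel) + (\<integral>\<^sup>+x. ennreal (g x - min (f x) (g x)) \<partial>lborel) = 1"
    using f1 g1 by (simp_all add: f_split g_split nn_integral_add)
  then have "(\<integral>\<^sup>+x. ?m x \<partial>lborel) \<noteq> \<infinity>"
    using ennreal_add_eq_top by fastforce
  then show "(\<integral>\<^sup>+x. ennreal (f x - min (f x) (g x)) \<partial>lborel) = (\<integral>\<^sup>+x. ennreal (g x - min (f x) (g x)) \<partial>lborel)"
    using sum ennreal_add_left_cancel by metis
  from sum show "(\<integral>\<^sup>+x. ennreal (f x - min (f x) (g x)) \<partial>lborel) \<noteq> \<infinity>"
    using ennreal_add_eq_top by fastforce
qed

text \<open>The density \<open>f\<close> is only a fallback witness, for the case that \<open>r\<close> vanishes almost everywhere.\<close>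

lemma probability_density_proportional:
  fixes r f :: "real \<Rightarrow> ennreal"
  assumes [measurable]: "r \<in> borel_measurable borel" "f \<in> borel_measurable borel"
    and r_finite: "(\<integral>\<^sup>+x. r x \<partial>lborel) \<noteq> \<infinity>" and f1: "(\<integral>\<^sup>+x. f x \<partial>lborel) = 1"
  obtains \<rho> where "\<rho> \<in> borel_measurable borel" "(\<integral>\<^sup>+v. \<rho> v \<partial>lborel) = 1"
    "AE v in lborel. (\<integral>\<^sup>+x. r x \<partial>lborel) * \<rho> v = r v"
proof (cases "(\<integral>\<^sup>+x. r x \<partial>lborel) = 0")
  case True
  then have "AE v in lborel. r v = 0"
    by (simp add: nn_integral_0_iff_AE)
  then have "AE v in lborel. (\<integral>\<^sup>+x. r x \<partial>lborel) * f v = r v"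
    by eventually_elim (simp add: True)
  then show ?thesis
    using f1 by (intro that[of f]) simp_all
next
  case False
  show ?thesis
  proof (rule that[of "\<lambda>v. r v / (\<integral>\<^sup>+x. r x \<partial>lborel)"])
    show "(\<integral>\<^sup>+v. r v / (\<integral>\<^sup>+x. r x \<partial>lborel) \<partial>lborel) = 1"
      using False r_finite by (simp add: nn_integral_divide top.not_eq_extremum)
    show "AE v in lborel. (\<integral>\<^sup>+x. r x \<partial>lborel) * (r v / (\<integral>\<^sup>+x. r x \<partial>lborel)) = r v"
      using False r_finite by (simp add: ennreal_times_divide mult.commute ennreal_mult_divide_eq)
  qed simp
qed

lemma Tc_density_le_weighted_L1:
  fixes f g :: "real \<Rightarrow> real" and c :: real
  assumes [measurable]: "f \<in> borel_measurable borel" "g \<in> borel_measurable borel"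
    and f0: "\<And>x. 0 \<le> f x" and g0: "\<And>x. 0 \<le> g x"
    and f1: "(\<integral>\<^sup>+x. f x \<partial>lborel) = 1" and g1: "(\<integral>\<^sup>+x. g x \<partial>lborel) = 1"
  shows "Tc (density lborel f) (density lborel g) \<le>
    (\<integral>\<^sup>+x. ennreal ((1/2 + \<bar>x - c\<bar>) * \<bar>g x - f x\<bar>) \<partial>lborel)"
proof -
  define m where "m x = ennreal (min (f x) (g x))" for x
  define r where "r x = ennreal (f x - min (f x) (g x))" for x
  define r' where "r' x = ennreal (g x - min (f x) (g x))" for x
  define w where "w x = ennreal (1/2 + \<bar>x - c\<bar>)" for x
  have [measurable]: "m \<in> borel_measurable borel" "r \<in> borel_measurable borel"
    "r' \<in> borel_measurable borel" "w \<in> borel_measurable borel" "(\<lambda>x. ennreal (f x)) \<in> borel_measurable borel"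
    unfolding m_def r_def r'_def w_def by measurable
  have f_split: "ennreal (f x) = m x + r x" and g_split: "ennreal (g x) = m x + r' x" for x
    using f0[of x] g0[of x] by (simp_all add: m_def r_def r'_def ennreal_plus[symmetric] del: ennreal_plus)
  have q: "(\<integral>\<^sup>+x. r' x \<partial>lborel) = (\<integral>\<^sup>+x. r x \<partial>lborel)" "(\<integral>\<^sup>+x. r' x \<partial>lborel) \<noteq> \<infinity>"
    using nn_integral_excess_over_min[OF assms] by (simp_all add: r_def r'_def)
  obtain \<rho> where [measurable]: "\<rho> \<in> borel_measurable borel" and \<rho>1: "(\<integral>\<^sup>+v. \<rho> v \<partial>lborel) = 1"
    and r'_eq: "AE v in lborel. (\<integral>\<^sup>+x. r' x \<partial>lborel) * \<rho> v = r' v"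
    by (rule probability_density_proportional[of r' "\<lambda>x. ennreal (f x)"]) (use q(2) f1 in simp_all)
  note r'_eq = r'_eq[unfolded q(1)]
  let ?P = "mixture_coupling m r \<rho>"
  have "density lborel (\<lambda>x. m x + r x) = density lborel f"
    by (simp add: f_split)
  moreover have "density lborel (\<lambda>v. m v + (\<integral>\<^sup>+x. r x \<partial>lborel) * \<rho> v) = density lborel g"
    using r'_eq by (intro density_cong) (auto simp: g_split)
  moreover have "(\<integral>\<^sup>+x. m x + r x \<partial>lborel) = 1"
    using f1 by (simp add: f_split)
  ultimately have "?P \<in> couplings (density lborel f) (density lborel g)"
    using mixture_coupling_in_couplings[of m r \<rho>] \<rho>1 by simp
  then have "Tc (density lborel f) (density lborel g) \<le> (\<integral>\<^sup>+p. transport_cost p \<partial>?P)"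
    by (rule Tc_le_coupling_cost)
  also have "\<dots> \<le> (\<integral>\<^sup>+x. r x * w x \<partial>lborel) + (\<integral>\<^sup>+x. r x \<partial>lborel) * (\<integral>\<^sup>+v. \<rho> v * w v \<partial>lborel)"
  proof (rule mixture_coupling_cost_le)
    fix x v
    have "\<bar>x - v\<bar> + (if x \<noteq> v then 1 else 0) \<le> (1/2 + \<bar>x - c\<bar>) + (1/2 + \<bar>v - c\<bar>)"
      by (simp add: abs_if)
    then show "transport_cost (x, v) \<le> w x + w v"
      unfolding transport_cost_def w_def by (simp add: ennreal_plus[symmetric] ennreal_leI del: ennreal_plus)
  qed (simp_all add: \<rho>1)
  also have "(\<integral>\<^sup>+x. r x \<partial>lborel) * (\<integral>\<^sup>+v. \<rho> v * w v \<partial>lborel) = (\<integral>\<^sup>+v. r' v * w v \<partial>lborel)"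
    using r'_eq by (subst nn_integral_cmult[symmetric]) (auto simp: mult.assoc[symmetric] intro!: nn_integral_cong_AE)
  also have "(\<integral>\<^sup>+x. r x * w x \<partial>lborel) + (\<integral>\<^sup>+v. r' v * w v \<partial>lborel) =
      (\<integral>\<^sup>+x. ennreal ((1/2 + \<bar>x - c\<bar>) * \<bar>g x - f x\<bar>) \<partial>lborel)"
  proof -
    have "r x + r' x = ennreal \<bar>g x - f x\<bar>" for x
      using f0[of x] g0[of x] by (simp add: r_def r'_def ennreal_plus[symmetric] del: ennreal_plus)
    then have "r x * w x + r' x * w x = ennreal ((1/2 + \<bar>x - c\<bar>) * \<bar>g x - f x\<bar>)" for x
      by (simp add: w_def distrib_right[symmetric] ennreal_mult mult.commute)
    then show ?thesis
      by (simp add: nn_integral_add[symmetric])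
  qed
  finally show ?thesis .
qed


section \<open>Absolute moments of the standard normal law\<close>

abbreviation std_normal_peak :: real where
  "std_normal_peak \<equiv> 1 / sqrt (2 * pi)"

lemma std_normal_density_le_peak: "std_normal_density z \<le> std_normal_peak"
  unfolding std_normal_density_def by (simp add: divide_le_cancel)

lemma std_normal_peak_le: "std_normal_peak \<le> 41 / 100"
proof -
  have "(100 / 41)\<^sup>2 \<le> 2 * pi"
    using pi_gt3 by (simp add: power2_eq_square)
  then have "100 / 41 \<le> sqrt (2 * pi)"
    by (rule real_le_rsqrt)
  then show ?thesis
    by (simp add: field_simps)
qed

lemma sqrt_2_div_pi: "sqrt (2 / pi) = 2 * std_normal_peak"
proof -
  have "sqrt (2 / pi) = 2 / (sqrt 2 * sqrt pi)"
    by (simp add: real_sqrt_divide field_simps)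
  then show ?thesis
    by (simp add: real_sqrt_mult)
qed

lemma std_normal_abs_moment_1:
  "has_bochner_integral lborel (\<lambda>z. std_normal_density z * \<bar>z\<bar>) (2 * std_normal_peak)"
  using std_normal_moment_abs_odd[of 0] by (simp add: sqrt_2_div_pi)

lemma std_normal_abs_moment_3:
  "has_bochner_integral lborel (\<lambda>z. std_normal_density z * \<bar>z\<bar> ^ 3) (4 * std_normal_peak)"
  using std_normal_moment_abs_odd[of 1] by (simp add: sqrt_2_div_pi)

lemma std_normal_moment_2: "has_bochner_integral lborel (\<lambda>z. std_normal_density z * z\<^sup>2) 1"
  using std_normal_moment_even[of 1] by (simp add: fact_numeral)

lemma std_normal_moment_0: "has_bochner_integral lborel std_normal_density 1"
  using std_normal_moment_even[of 0] by simp

lemma has_bochner_integral_one_minus_square: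
  "has_bochner_integral lborel (\<lambda>z::real. (1 - z\<^sup>2) * indicator {-1..1} z) (4 / 3)"
proof -
  have "has_bochner_integral lborel (\<lambda>z::real. (1 - z\<^sup>2) * indicator {-1..1} z)
      ((\<lambda>z. z - z ^ 3 / 3) 1 - (\<lambda>z. z - z ^ 3 / 3) (-1))"
    by (rule has_bochner_integral_FTC_Icc_real) (auto intro!: derivative_eq_intros simp: power2_eq_square)
  then show ?thesis by simp
qed

lemma has_bochner_integral_abs_mul_one_minus_square:
  "has_bochner_integral lborel (\<lambda>z::real. \<bar>z\<bar> * (1 - z\<^sup>2) * indicator {-1..1} z) (1 / 2)"
proof -
  have "has_bochner_integral lborel (\<lambda>z::real. (z - z ^ 3) * indicator {0..1} z)
      ((\<lambda>z. z\<^sup>2 / 2 - z ^ 4 / 4) 1 - (\<lambda>z. z\<^sup>2 / 2 - z ^ 4 / 4) 0)"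
    by (rule has_bochner_integral_FTC_Icc_real) (auto intro!: derivative_eq_intros simp: power2_eq_square)
  moreover have "has_bochner_integral lborel (\<lambda>z::real. (z ^ 3 - z) * indicator {-1..0} z)
      ((\<lambda>z. z ^ 4 / 4 - z\<^sup>2 / 2) 0 - (\<lambda>z. z ^ 4 / 4 - z\<^sup>2 / 2) (-1))"
    by (rule has_bochner_integral_FTC_Icc_real) (auto intro!: derivative_eq_intros simp: power2_eq_square)
  ultimately have "has_bochner_integral lborel
      (\<lambda>z::real. (z - z ^ 3) * indicator {0..1} z + (z ^ 3 - z) * indicator {-1..0} z) (1 / 2)"
    using has_bochner_integral_add by fastforce
  moreover have "(z - z ^ 3) * indicator {0..1} z + (z ^ 3 - z) * indicator {-1..0} z =
      \<bar>z\<bar> * (1 - z\<^sup>2) * indicator {-1..1} z" for z :: real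
    by (cases "z = 0") (auto simp: indicator_def abs_if power2_eq_square power3_eq_cube algebra_simps)
  ultimately show ?thesis
    by simp
qed

text \<open>Both bounds use \<open>\<bar>z\<^sup>2 - 1\<bar> = (z\<^sup>2 - 1) + 2 (1 - z\<^sup>2)\<^sup>+\<close>; on \<open>[-1, 1]\<close>, the support of the
  positive part, the density is at most its peak.\<close>

lemma std_normal_abs_sq_minus_one_le:
  "std_normal_density z * \<bar>z\<^sup>2 - 1\<bar> \<le>
    std_normal_density z * z\<^sup>2 - std_normal_density z + 2 * std_normal_peak * ((1 - z\<^sup>2) * indicator {-1..1} z)"
proof (cases "\<bar>z\<bar> \<le> 1")
  case True
  then have "z\<^sup>2 \<le> 1" "z \<in> {-1..1}"
    by (auto simp: abs_square_le_1)
  moreover have "std_normal_density z * (1 - z\<^sup>2) \<le> std_normal_peak * (1 - z\<^sup>2)"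
    using \<open>z\<^sup>2 \<le> 1\<close> std_normal_density_le_peak by (intro mult_right_mono) auto
  ultimately show ?thesis
    by (simp add: right_diff_distrib)
next
  case False
  then have "1 < z\<^sup>2" "z \<notin> {-1..1}"
    using abs_square_le_1[of z] by auto
  then show ?thesis
    by (simp add: right_diff_distrib)
qed

lemma std_normal_abs_mul_abs_sq_minus_one_le:
  "std_normal_density z * (\<bar>z\<bar> * \<bar>z\<^sup>2 - 1\<bar>) \<le>
    std_normal_density z * \<bar>z\<bar> ^ 3 - std_normal_density z * \<bar>z\<bar> +
    2 * std_normal_peak * (\<bar>z\<bar> * (1 - z\<^sup>2) * indicator {-1..1} z)"
proof -
  have cube: "std_normal_density z * \<bar>z\<bar> ^ 3 - std_normal_density z * \<bar>z\<bar> =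
      std_normal_density z * (\<bar>z\<bar> * (z\<^sup>2 - 1))"
    by (simp add: power2_eq_square power3_eq_cube abs_mult algebra_simps)
  show ?thesis
  proof (cases "\<bar>z\<bar> \<le> 1")
    case True
    then have "z\<^sup>2 \<le> 1" "z \<in> {-1..1}"
      by (auto simp: abs_square_le_1)
    moreover have "std_normal_density z * (\<bar>z\<bar> * (1 - z\<^sup>2)) \<le> std_normal_peak * (\<bar>z\<bar> * (1 - z\<^sup>2))"
      using \<open>z\<^sup>2 \<le> 1\<close> std_normal_density_le_peak by (intro mult_right_mono) auto
    moreover have "\<bar>z\<^sup>2 - 1\<bar> = 1 - z\<^sup>2" "z\<^sup>2 - 1 = - (1 - z\<^sup>2)"
      using \<open>z\<^sup>2 \<le> 1\<close> by auto
    ultimately show ?thesis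
      unfolding cube by (simp only: mult_minus_right indicator_simps)
  next
    case False
    then have "1 < z\<^sup>2" "z \<notin> {-1..1}"
      using abs_square_le_1[of z] by auto
    then show ?thesis
      unfolding cube by simp
  qed
qed

lemma integral_std_normal_abs_sq_minus_one_le:
  "integrable lborel (\<lambda>z. std_normal_density z * \<bar>z\<^sup>2 - 1\<bar>)"
  "(\<integral>z. std_normal_density z * \<bar>z\<^sup>2 - 1\<bar> \<partial>lborel) \<le> 8 / 3 * std_normal_peak"
proof -
  have "integrable lborel (\<lambda>z. std_normal_density z * z\<^sup>2 - std_normal_density z)"
    using std_normal_moment_2 std_normal_moment_0 by (auto intro: integrable.intros)
  then have "integrable lborel (\<lambda>z. std_normal_density z * (z\<^sup>2 - 1))"
    by (simp add: right_diff_distrib)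
  from integrable_abs[OF this] show int: "integrable lborel (\<lambda>z. std_normal_density z * \<bar>z\<^sup>2 - 1\<bar>)"
    by (simp add: abs_mult)
  have majorant: "has_bochner_integral lborel
      (\<lambda>z. std_normal_density z * z\<^sup>2 - std_normal_density z + 2 * std_normal_peak * ((1 - z\<^sup>2) * indicator {-1..1} z))
      (1 - 1 + 2 * std_normal_peak * (4 / 3))"
    by (intro has_bochner_integral_add has_bochner_integral_diff has_bochner_integral_mult_right
        std_normal_moment_2 std_normal_moment_0 has_bochner_integral_one_minus_square)
  have "(\<integral>z. std_normal_density z * \<bar>z\<^sup>2 - 1\<bar> \<partial>lborel) \<le> 1 - 1 + 2 * std_normal_peak * (4 / 3)"
    unfolding has_bochner_integral_integral_eq[OF majorant, symmetric]
    by (rule integral_mono[OF int integrable.intros[OF majorant] std_normal_abs_sq_minus_one_le])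
  then show "(\<integral>z. std_normal_density z * \<bar>z\<^sup>2 - 1\<bar> \<partial>lborel) \<le> 8 / 3 * std_normal_peak"
    by simp
qed

lemma integral_std_normal_abs_mul_abs_sq_minus_one_le:
  "integrable lborel (\<lambda>z. std_normal_density z * (\<bar>z\<bar> * \<bar>z\<^sup>2 - 1\<bar>))"
  "(\<integral>z. std_normal_density z * (\<bar>z\<bar> * \<bar>z\<^sup>2 - 1\<bar>) \<partial>lborel) \<le> 3 * std_normal_peak"
proof -
  have "integrable lborel (\<lambda>z. std_normal_density z * \<bar>z\<bar> ^ 3 - std_normal_density z * \<bar>z\<bar>)"
    using std_normal_abs_moment_3 std_normal_abs_moment_1 by (auto intro: integrable.intros)
  moreover have "std_normal_density z * \<bar>z\<bar> ^ 3 - std_normal_density z * \<bar>z\<bar> =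
      std_normal_density z * (\<bar>z\<bar> * (z\<^sup>2 - 1))" for z
    by (simp add: power2_eq_square power3_eq_cube abs_mult algebra_simps)
  ultimately have "integrable lborel (\<lambda>z. std_normal_density z * (\<bar>z\<bar> * (z\<^sup>2 - 1)))"
    by simp
  from integrable_abs[OF this] show int: "integrable lborel (\<lambda>z. std_normal_density z * (\<bar>z\<bar> * \<bar>z\<^sup>2 - 1\<bar>))"
    by (simp add: abs_mult)
  have majorant: "has_bochner_integral lborel
      (\<lambda>z. std_normal_density z * \<bar>z\<bar> ^ 3 - std_normal_density z * \<bar>z\<bar> +
        2 * std_normal_peak * (\<bar>z\<bar> * (1 - z\<^sup>2) * indicator {-1..1} z))
      (4 * std_normal_peak - 2 * std_normal_peak + 2 * std_normal_peak * (1 / 2))"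
    by (intro has_bochner_integral_add has_bochner_integral_diff has_bochner_integral_mult_right
        std_normal_abs_moment_3 std_normal_abs_moment_1 has_bochner_integral_abs_mul_one_minus_square)
  have "(\<integral>z. std_normal_density z * (\<bar>z\<bar> * \<bar>z\<^sup>2 - 1\<bar>) \<partial>lborel) \<le>
      4 * std_normal_peak - 2 * std_normal_peak + 2 * std_normal_peak * (1 / 2)"
    unfolding has_bochner_integral_integral_eq[OF majorant, symmetric]
    by (rule integral_mono[OF int integrable.intros[OF majorant] std_normal_abs_mul_abs_sq_minus_one_le])
  then show "(\<integral>z. std_normal_density z * (\<bar>z\<bar> * \<bar>z\<^sup>2 - 1\<bar>) \<partial>lborel) \<le> 3 * std_normal_peak"
    by simp
qed

lemma nn_integral_std_normal_weighted_le:
  fixes a d y :: real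
  assumes "0 \<le> a" "0 \<le> d" "0 \<le> y"
  shows "(\<integral>\<^sup>+z. ennreal ((a + \<bar>z\<bar>) * std_normal_density z * (\<bar>z\<bar> * d + \<bar>z\<^sup>2 - 1\<bar> * y)) \<partial>lborel) \<le>
    ennreal (a * d * (2 * std_normal_peak) + d + y * (a * (8 / 3 * std_normal_peak) + 3 * std_normal_peak))"
proof -
  let ?\<phi> = std_normal_density
  have expand: "(a + \<bar>z\<bar>) * ?\<phi> z * (\<bar>z\<bar> * d + \<bar>z\<^sup>2 - 1\<bar> * y) =
      a * d * (?\<phi> z * \<bar>z\<bar>) + d * (?\<phi> z * z\<^sup>2) + y * a * (?\<phi> z * \<bar>z\<^sup>2 - 1\<bar>) +
      y * (?\<phi> z * (\<bar>z\<bar> * \<bar>z\<^sup>2 - 1\<bar>))" for z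
    by (simp add: algebra_simps power2_eq_square abs_mult_self_eq)
  note I1 = integral_std_normal_abs_sq_minus_one_le and I2 = integral_std_normal_abs_mul_abs_sq_minus_one_le
  have int: "integrable lborel (\<lambda>z. a * d * (?\<phi> z * \<bar>z\<bar>) + d * (?\<phi> z * z\<^sup>2) +
      y * a * (?\<phi> z * \<bar>z\<^sup>2 - 1\<bar>) + y * (?\<phi> z * (\<bar>z\<bar> * \<bar>z\<^sup>2 - 1\<bar>)))"
    using integrable.intros[OF std_normal_abs_moment_1] integrable.intros[OF std_normal_moment_2] I1(1) I2(1)
    by simp
  have "(\<integral>\<^sup>+z. ennreal ((a + \<bar>z\<bar>) * ?\<phi> z * (\<bar>z\<bar> * d + \<bar>z\<^sup>2 - 1\<bar> * y)) \<partial>lborel) =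
      ennreal (a * d * (2 * std_normal_peak) + d + y * a * (\<integral>z. ?\<phi> z * \<bar>z\<^sup>2 - 1\<bar> \<partial>lborel) +
        y * (\<integral>z. ?\<phi> z * (\<bar>z\<bar> * \<bar>z\<^sup>2 - 1\<bar>) \<partial>lborel))"
    unfolding expand using assms int std_normal_abs_moment_1 std_normal_moment_2 I1(1) I2(1)
    by (subst nn_integral_eq_integral)
      (auto simp: has_bochner_integral_integral_eq integral_add integrable.intros)
  also have "\<dots> \<le> ennreal (a * d * (2 * std_normal_peak) + d + y * (a * (8 / 3 * std_normal_peak) + 3 * std_normal_peak))"
    using assms I1(2) I2(2) mult_left_mono[OF I1(2), of "y * a"] mult_left_mono[OF I2(2), of y]
    by (intro ennreal_leI) (simp add: algebra_simps)
  finally show ?thesis .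
qed

section \<open>Interpolating between two normal densities\<close>

lemma normal_density_eq_std:
  assumes "0 < \<sigma>"
  shows "normal_density \<mu> \<sigma> x = std_normal_density ((x - \<mu>) / \<sigma>) / \<sigma>"
proof -
  have "sqrt (2 * pi * \<sigma>\<^sup>2) = sqrt (2 * pi) * \<sigma>" "(x - \<mu>)\<^sup>2 / (2 * \<sigma>\<^sup>2) = ((x - \<mu>) / \<sigma>)\<^sup>2 / 2"
    using assms by (simp_all add: real_sqrt_mult power_divide)
  then show ?thesis
    unfolding normal_density_def by (simp add: field_simps)
qed

lemma has_real_derivative_std_normal_density[derivative_intros]:
  assumes "(f has_real_derivative f') (at x within A)"
  shows "((\<lambda>x. std_normal_density (f x)) has_real_derivative
    (- f x * std_normal_density (f x) * f')) (at x within A)"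
  unfolding std_normal_density_def using assms
  by (auto intro!: derivative_eq_intros simp: power2_eq_square field_simps)

text \<open>The \<open>u\<close>-derivative of the density of \<open>N(s + u (t - s), (1 + u (\<sigma> - 1))\<^sup>2)\<close>; this family of
  normal laws interpolates between \<open>N(s, 1)\<close> at \<open>u = 0\<close> and \<open>N(t, \<sigma>\<^sup>2)\<close> at \<open>u = 1\<close>.\<close>

definition normal_path_deriv :: "real \<Rightarrow> real \<Rightarrow> real \<Rightarrow> real \<Rightarrow> real \<Rightarrow> real" where
  "normal_path_deriv s t \<sigma> u x =
    (let S = 1 + u * (\<sigma> - 1); z = (x - (s + u * (t - s))) / S
     in std_normal_density z / S\<^sup>2 * (z * (t - s) + (z\<^sup>2 - 1) * (\<sigma> - 1)))"

lemma has_real_derivative_normal_path: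
  assumes S_pos: "0 < 1 + u * (\<sigma> - 1)"
  shows "((\<lambda>u. normal_density (s + u * (t - s)) (1 + u * (\<sigma> - 1)) x) has_real_derivative
    normal_path_deriv s t \<sigma> u x) (at u)"
proof -
  define S where "S u = 1 + u * (\<sigma> - 1)" for u
  define z where "z u = (x - (s + u * (t - s))) / S u" for u
  have "S u \<noteq> 0"
    using S_pos by (simp add: S_def)
  have dS: "(S has_real_derivative \<sigma> - 1) (at u)"
    unfolding S_def[abs_def] by (auto intro!: derivative_eq_intros)
  have dz: "(z has_real_derivative (- (t - s) - z u * (\<sigma> - 1)) / S u) (at u)"
    unfolding z_def[abs_def] using \<open>S u \<noteq> 0\<close>
    by (auto intro!: derivative_eq_intros dS simp: field_simps z_def)
  have "((\<lambda>u. std_normal_density (z u) / S u) has_real_derivative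
      (- z u * std_normal_density (z u) * ((- (t - s) - z u * (\<sigma> - 1)) / S u) * S u -
        std_normal_density (z u) * (\<sigma> - 1)) / (S u * S u)) (at u)"
    by (rule DERIV_divide[OF has_real_derivative_std_normal_density[OF dz] dS \<open>S u \<noteq> 0\<close>])
  moreover have "(- z u * std_normal_density (z u) * ((- (t - s) - z u * (\<sigma> - 1)) / S u) * S u -
        std_normal_density (z u) * (\<sigma> - 1)) / (S u * S u) = normal_path_deriv s t \<sigma> u x"
  proof -
    have field_eq: "(- Z * P * ((- (t - s) - Z * (\<sigma> - 1)) / S') * S' - P * (\<sigma> - 1)) / (S' * S') =
        P / S'\<^sup>2 * (Z * (t - s) + (Z\<^sup>2 - 1) * (\<sigma> - 1))" if "S' \<noteq> 0" for S' Z P :: real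
      using that by (simp add: field_simps power2_eq_square)
    have "normal_path_deriv s t \<sigma> u x =
        std_normal_density (z u) / (S u)\<^sup>2 * (z u * (t - s) + ((z u)\<^sup>2 - 1) * (\<sigma> - 1))"
      by (simp only: normal_path_deriv_def Let_def flip: S_def z_def)
    then show ?thesis
      by (simp only: field_eq[OF \<open>S u \<noteq> 0\<close>])
  qed
  ultimately have "((\<lambda>u. std_normal_density (z u) / S u) has_real_derivative normal_path_deriv s t \<sigma> u x) (at u)"
    by (rule DERIV_cong)
  then show ?thesis
  proof (rule has_field_derivative_transform_within_open)
    show "open {u. 0 < S u}"
      unfolding S_def by (intro open_Collect_less continuous_intros)
    show "u \<in> {u. 0 < S u}"
      using S_pos by (simp add: S_def)
    fix w assume "w \<in> {u. 0 < S u}"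
    then show "std_normal_density (z w) / S w = normal_density (s + w * (t - s)) (1 + w * (\<sigma> - 1)) x"
      by (subst normal_density_eq_std) (simp_all add: S_def z_def)
  qed
qed

lemma borel_measurable_normal_path_deriv[measurable (raw)]:
  assumes [measurable]: "f \<in> borel_measurable M" "g \<in> borel_measurable M"
  shows "(\<lambda>p. normal_path_deriv s t \<sigma> (f p) (g p)) \<in> borel_measurable M"
  unfolding normal_path_deriv_def Let_def normal_density_def by measurable

lemma abs_normal_density_diff_le_path_integral:
  assumes "1 \<le> \<sigma>"
  shows "ennreal \<bar>normal_density t \<sigma> x - normal_density s 1 x\<bar> \<le>
    (\<integral>\<^sup>+u. ennreal \<bar>normal_path_deriv s t \<sigma> u x\<bar> * indicator {0..1} u \<partial>lborel)"
proof -
  have S_pos: "0 < 1 + u * (\<sigma> - 1)" if "0 \<le> u" for u :: real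
    using assms that by (simp add: add_pos_nonneg)
  have "has_bochner_integral lborel (\<lambda>u. normal_path_deriv s t \<sigma> u x * indicator {0..1} u)
      ((\<lambda>u. normal_density (s + u * (t - s)) (1 + u * (\<sigma> - 1)) x) 1 -
       (\<lambda>u. normal_density (s + u * (t - s)) (1 + u * (\<sigma> - 1)) x) 0)"
  proof (rule has_bochner_integral_FTC_Icc_real)
    fix u :: real assume "0 \<le> u"
    then show "((\<lambda>u. normal_density (s + u * (t - s)) (1 + u * (\<sigma> - 1)) x) has_real_derivative
        normal_path_deriv s t \<sigma> u x) (at u)"
      by (intro has_real_derivative_normal_path S_pos)
    show "isCont (\<lambda>u. normal_path_deriv s t \<sigma> u x) u"
      unfolding normal_path_deriv_def Let_def std_normal_density_def
      using S_pos[OF \<open>0 \<le> u\<close>] by (intro continuous_intros) auto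
  qed simp
  then have FTC: "has_bochner_integral lborel (\<lambda>u. normal_path_deriv s t \<sigma> u x * indicator {0..1} u)
      (normal_density t \<sigma> x - normal_density s 1 x)"
    by simp
  have int: "integrable lborel (\<lambda>u. \<bar>normal_path_deriv s t \<sigma> u x\<bar> * indicator {0..1} u)"
    using integrable_abs[OF integrable.intros[OF FTC]] by (simp add: abs_mult)
  have "\<bar>normal_density t \<sigma> x - normal_density s 1 x\<bar> \<le>
      (\<integral>u. \<bar>normal_path_deriv s t \<sigma> u x\<bar> * indicator {0..1} u \<partial>lborel)"
    unfolding has_bochner_integral_integral_eq[OF FTC, symmetric]
    by (rule integral_abs_bound_integral[OF integrable.intros[OF FTC] int]) (simp add: abs_mult)
  also have "\<dots> = enn2real (\<integral>\<^sup>+u. ennreal \<bar>normal_path_deriv s t \<sigma> u x\<bar> * indicator {0..1} u \<partial>lborel)"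
    using nn_integral_eq_integral[OF int] by (simp add: ennreal_mult'' ennreal_indicator)
  finally show ?thesis
    using nn_integral_eq_integral[OF int] by (simp add: ennreal_mult'' ennreal_indicator ennreal_leI)
qed

lemma weighted_normal_path_deriv_rescaled_le:
  fixes s t \<sigma> u z :: real
  assumes \<sigma>: "1 \<le> \<sigma>" and u: "0 \<le> u" "u \<le> 1"
  defines "S \<equiv> 1 + u * (\<sigma> - 1)" and "\<mu> \<equiv> s + u * (t - s)"
  defines "d \<equiv> \<bar>s - t\<bar>"
  defines "a \<equiv> 1/2 + (1 - u) * d"
  shows "S * ((1/2 + \<bar>\<mu> + S * z - t\<bar>) * \<bar>normal_path_deriv s t \<sigma> u (\<mu> + S * z)\<bar>) \<le>
    (a + \<bar>z\<bar>) * std_normal_density z * (\<bar>z\<bar> * d + \<bar>z\<^sup>2 - 1\<bar> * (\<sigma> - 1))"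
proof -
  let ?\<phi> = std_normal_density
  let ?R = "\<bar>z\<bar> * d + \<bar>z\<^sup>2 - 1\<bar> * (\<sigma> - 1)"
  have "1 \<le> S" "0 \<le> d" "0 \<le> a"
    using \<sigma> u by (simp_all add: S_def d_def a_def)
  have "normal_path_deriv s t \<sigma> u (\<mu> + S * z) = ?\<phi> z / S\<^sup>2 * (z * (t - s) + (z\<^sup>2 - 1) * (\<sigma> - 1))"
    using \<open>1 \<le> S\<close> by (simp add: normal_path_deriv_def Let_def flip: S_def \<mu>_def)
  moreover have "\<bar>z * (t - s) + (z\<^sup>2 - 1) * (\<sigma> - 1)\<bar> \<le> ?R"
    using \<sigma> by (auto simp: d_def abs_mult abs_minus_commute intro!: order_trans[OF abs_triangle_ineq])
  ultimately have deriv: "\<bar>normal_path_deriv s t \<sigma> u (\<mu> + S * z)\<bar> \<le> ?\<phi> z / S\<^sup>2 * ?R"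
    by (simp add: abs_mult) (intro divide_right_mono mult_left_mono; simp)
  have "\<bar>\<mu> + S * z - t\<bar> = \<bar>(1 - u) * (s - t) + S * z\<bar>"
    by (simp add: \<mu>_def algebra_simps)
  also have "\<dots> \<le> (1 - u) * d + S * \<bar>z\<bar>"
    using u \<open>1 \<le> S\<close> abs_triangle_ineq[of "(1 - u) * (s - t)" "S * z"] by (simp add: d_def abs_mult)
  finally have weight: "1/2 + \<bar>\<mu> + S * z - t\<bar> \<le> a + S * \<bar>z\<bar>"
    by (simp add: a_def)
  have "S * ((1/2 + \<bar>\<mu> + S * z - t\<bar>) * \<bar>normal_path_deriv s t \<sigma> u (\<mu> + S * z)\<bar>) \<le>
      S * ((a + S * \<bar>z\<bar>) * (?\<phi> z / S\<^sup>2 * ?R))"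
    using weight deriv \<open>1 \<le> S\<close> by (intro mult_left_mono mult_mono) auto
  also have "\<dots> = (a / S + \<bar>z\<bar>) * ?\<phi> z * ?R"
    using \<open>1 \<le> S\<close> by (simp add: field_simps power2_eq_square)
  also have "\<dots> \<le> (a + \<bar>z\<bar>) * ?\<phi> z * ?R"
    using \<open>1 \<le> S\<close> \<open>0 \<le> a\<close> \<open>0 \<le> d\<close> \<sigma>
    by (intro mult_right_mono add_right_mono) (auto simp: divide_le_eq mult_le_cancel_left1 order_trans[OF _ mult_right_mono])
  finally show ?thesis .
qed

lemma nn_integral_weighted_normal_path_deriv_le:
  fixes s t \<sigma> u :: real
  assumes \<sigma>: "1 \<le> \<sigma>" and u: "0 \<le> u" "u \<le> 1"
  defines "d \<equiv> \<bar>s - t\<bar>"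
  defines "a \<equiv> 1/2 + (1 - u) * d"
  shows "(\<integral>\<^sup>+x. ennreal ((1/2 + \<bar>x - t\<bar>) * \<bar>normal_path_deriv s t \<sigma> u x\<bar>) \<partial>lborel) \<le>
    ennreal (a * d * (2 * std_normal_peak) + d + (\<sigma> - 1) * (a * (8 / 3 * std_normal_peak) + 3 * std_normal_peak))"
proof -
  define S where "S = 1 + u * (\<sigma> - 1)"
  define \<mu> where "\<mu> = s + u * (t - s)"
  have "1 \<le> S" "0 \<le> d" "0 \<le> a"
    using \<sigma> u by (simp_all add: S_def d_def a_def)
  have "(\<integral>\<^sup>+x. ennreal ((1/2 + \<bar>x - t\<bar>) * \<bar>normal_path_deriv s t \<sigma> u x\<bar>) \<partial>lborel) =
      ennreal S * (\<integral>\<^sup>+z. ennreal ((1/2 + \<bar>\<mu> + S * z - t\<bar>) * \<bar>normal_path_deriv s t \<sigma> u (\<mu> + S * z)\<bar>) \<partial>lborel)"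
    using \<open>1 \<le> S\<close> by (subst nn_integral_real_affine[where t = \<mu> and c = S]) auto
  also have "\<dots> = (\<integral>\<^sup>+z. ennreal (S * ((1/2 + \<bar>\<mu> + S * z - t\<bar>) * \<bar>normal_path_deriv s t \<sigma> u (\<mu> + S * z)\<bar>)) \<partial>lborel)"
    using \<open>1 \<le> S\<close> by (subst nn_integral_cmult[symmetric]) (auto simp: ennreal_mult)
  also have "\<dots> \<le> (\<integral>\<^sup>+z. ennreal ((a + \<bar>z\<bar>) * std_normal_density z * (\<bar>z\<bar> * d + \<bar>z\<^sup>2 - 1\<bar> * (\<sigma> - 1))) \<partial>lborel)"
    unfolding S_def \<mu>_def a_def d_def
    by (intro nn_integral_mono ennreal_leI weighted_normal_path_deriv_rescaled_le \<sigma> u)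
  also have "\<dots> \<le> ennreal (a * d * (2 * std_normal_peak) + d + (\<sigma> - 1) * (a * (8 / 3 * std_normal_peak) + 3 * std_normal_peak))"
    using nn_integral_std_normal_weighted_le[OF \<open>0 \<le> a\<close> \<open>0 \<le> d\<close>, of "\<sigma> - 1"] \<sigma> by simp
  finally show ?thesis .
qed

lemma nn_integral_weighted_normal_density_diff_le_path:
  fixes w :: "real \<Rightarrow> ennreal"
  assumes \<sigma>: "1 \<le> \<sigma>" and [measurable]: "w \<in> borel_measurable borel"
  shows "(\<integral>\<^sup>+x. w x * ennreal \<bar>normal_density t \<sigma> x - normal_density s 1 x\<bar> \<partial>lborel) \<le>
    (\<integral>\<^sup>+u. (\<integral>\<^sup>+x. w x * ennreal \<bar>normal_path_deriv s t \<sigma> u x\<bar> \<partial>lborel) * indicator {0..1} u \<partial>lborel)"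
proof -
  let ?D = "\<lambda>u x. ennreal \<bar>normal_path_deriv s t \<sigma> u x\<bar>"
  have "(\<integral>\<^sup>+x. w x * ennreal \<bar>normal_density t \<sigma> x - normal_density s 1 x\<bar> \<partial>lborel) \<le>
      (\<integral>\<^sup>+x. w x * (\<integral>\<^sup>+u. ?D u x * indicator {0..1} u \<partial>lborel) \<partial>lborel)"
    by (intro nn_integral_mono mult_left_mono abs_normal_density_diff_le_path_integral \<sigma>) simp
  also have "\<dots> = (\<integral>\<^sup>+x. \<integral>\<^sup>+u. w x * ?D u x * indicator {0..1} u \<partial>lborel \<partial>lborel)"
    by (simp add: nn_integral_cmult mult.assoc)
  also have "\<dots> = (\<integral>\<^sup>+u. \<integral>\<^sup>+x. w x * ?D u x * indicator {0..1} u \<partial>lborel \<partial>lborel)"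
    by (rule lborel_pair.Fubini') measurable
  also have "\<dots> = (\<integral>\<^sup>+u. (\<integral>\<^sup>+x. w x * ?D u x \<partial>lborel) * indicator {0..1} u \<partial>lborel)"
    by (simp add: nn_integral_multc)
  finally show ?thesis .
qed

lemma nn_integral_weighted_normal_density_diff_le:
  fixes s t \<sigma> :: real
  assumes \<sigma>: "1 \<le> \<sigma>"
  defines "d \<equiv> \<bar>s - t\<bar>"
  shows "(\<integral>\<^sup>+x. ennreal ((1/2 + \<bar>x - t\<bar>) * \<bar>normal_density t \<sigma> x - normal_density s 1 x\<bar>) \<partial>lborel) \<le>
    ennreal ((1/2 + d/2) * (2 * std_normal_peak * d + 8/3 * std_normal_peak * (\<sigma> - 1)) +
      d + 3 * std_normal_peak * (\<sigma> - 1))"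
proof -
  let ?p = std_normal_peak
  define B where "B u = (1/2 + (1 - u) * d) * d * (2 * ?p) + d + (\<sigma> - 1) * ((1/2 + (1 - u) * d) * (8/3 * ?p) + 3 * ?p)"
    for u
  define F where "F u = (u/2 + (u - u\<^sup>2/2) * d) * d * (2 * ?p) + d * u +
      (\<sigma> - 1) * ((u/2 + (u - u\<^sup>2/2) * d) * (8/3 * ?p) + 3 * ?p * u)" for u
  have "(\<integral>\<^sup>+x. ennreal ((1/2 + \<bar>x - t\<bar>) * \<bar>normal_density t \<sigma> x - normal_density s 1 x\<bar>) \<partial>lborel) \<le>
      (\<integral>\<^sup>+u. (\<integral>\<^sup>+x. ennreal (1/2 + \<bar>x - t\<bar>) * ennreal \<bar>normal_path_deriv s t \<sigma> u x\<bar> \<partial>lborel) *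
        indicator {0..1} u \<partial>lborel)"
    using nn_integral_weighted_normal_density_diff_le_path[OF \<sigma>, of "\<lambda>x. ennreal (1/2 + \<bar>x - t\<bar>)" t s]
    by (simp add: ennreal_mult)
  also have "\<dots> \<le> (\<integral>\<^sup>+u. ennreal (B u) * indicator {0..1} u \<partial>lborel)"
  proof (intro nn_integral_mono)
    fix u :: real
    show "(\<integral>\<^sup>+x. ennreal (1/2 + \<bar>x - t\<bar>) * ennreal \<bar>normal_path_deriv s t \<sigma> u x\<bar> \<partial>lborel) *
        indicator {0..1} u \<le> ennreal (B u) * indicator {0..1} u"
      using nn_integral_weighted_normal_path_deriv_le[OF \<sigma>, where s = s and t = t and u = u]
      by (cases "u \<in> {0..1}") (simp_all add: B_def d_def ennreal_mult)
  qed
  also have "\<dots> = ennreal (F 1 - F 0)"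
  proof (rule nn_integral_FTC_Icc)
    show "B \<in> borel_measurable borel"
      unfolding B_def by measurable
    fix u :: real assume "u \<in> {0..1}"
    then show "0 \<le> B u"
      using \<sigma> by (simp add: B_def d_def)
    show "(F has_real_derivative B u) (at u)"
      unfolding F_def[abs_def] B_def by (auto intro!: derivative_eq_intros simp: field_simps)
  qed simp
  also have "F 1 - F 0 = (1/2 + d/2) * (2 * ?p * d + 8/3 * ?p * (\<sigma> - 1)) + d + 3 * ?p * (\<sigma> - 1)"
    by (simp add: F_def field_simps power2_eq_square)
  finally show ?thesis .
qed

section \<open>The affine coupling of two normal laws\<close>

lemma measurable_graph:
  assumes "sets M = sets borel" and [measurable]: "T \<in> borel_measurable borel"
  shows "(\<lambda>x. (x, T x)) \<in> M \<rightarrow>\<^sub>M (borel :: (real \<times> real) measure)"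
proof -
  have "(\<lambda>x. (x, T x)) \<in> borel \<rightarrow>\<^sub>M borel \<Otimes>\<^sub>M borel"
    by measurable
  then show ?thesis
    by (simp add: measurable_cong_sets[OF assms(1) refl] borel_prod)
qed

lemma graph_coupling_in_couplings:
  assumes M: "prob_space M" "sets M = sets borel" and T: "T \<in> borel_measurable borel"
  shows "distr M borel (\<lambda>x. (x, T x)) \<in> couplings M (distr M borel T)"
proof -
  have [measurable]: "(\<lambda>x. (x, T x)) \<in> M \<rightarrow>\<^sub>M borel" "T \<in> M \<rightarrow>\<^sub>M borel"
    using measurable_graph[OF M(2) T] T by (simp_all add: measurable_cong_sets[OF M(2) refl])
  have "distr (distr M borel (\<lambda>x. (x, T x))) borel fst = distr M borel (\<lambda>x. x)"
    by (subst distr_distr) (simp_all add: comp_def)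
  also have "\<dots> = M"
    by (rule distr_id2) (simp add: M)
  finally have "distr (distr M borel (\<lambda>x. (x, T x))) borel fst = M" .
  moreover have "distr (distr M borel (\<lambda>x. (x, T x))) borel snd = distr M borel T"
    by (subst distr_distr) (simp_all add: comp_def)
  ultimately show ?thesis
    using M by (simp add: couplings_def prob_space.prob_space_distr)
qed

lemma distr_normal_density_affine:
  fixes s t \<sigma> :: real
  assumes "0 < \<sigma>"
  shows "distr (density lborel (normal_density s 1)) borel (\<lambda>x. t + \<sigma> * (x - s)) =
    density lborel (normal_density t \<sigma>)"
proof -
  let ?M = "density lborel (normal_density s 1)"
  have "distributed ?M lborel (\<lambda>x. x) (normal_density s 1)"
    by (simp add: distributed_def distr_id2)
  from prob_space.normal_density_affine[OF prob_space_normal_density this, of \<sigma> "t - \<sigma> * s"] assms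
  show ?thesis
    by (simp add: distributed_def algebra_simps cong: distr_cong)
qed

lemma nn_integral_normal_density_affine_abs:
  fixes s a k :: real
  assumes "0 \<le> a" "0 \<le> k"
  shows "(\<integral>\<^sup>+x. ennreal (normal_density s 1 x) * ennreal (a + k * \<bar>x - s\<bar>) \<partial>lborel) =
    ennreal (a + k * (2 * std_normal_peak))"
proof -
  let ?f = "\<lambda>x. a * normal_density s 1 x + k * (normal_density s 1 x * \<bar>x - s\<bar>)"
  have "has_bochner_integral lborel (\<lambda>x. normal_density s 1 x * \<bar>x - s\<bar>) (2 * std_normal_peak)"
    using normal_moment_abs_odd[of 1 s 0] by (simp add: sqrt_2_div_pi)
  then have f: "has_bochner_integral lborel ?f (a * 1 + k * (2 * std_normal_peak))"
    by (intro has_bochner_integral_add has_bochner_integral_mult_right)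
      (use normal_moment_even[of 1 s 0] in simp_all)
  have "ennreal (normal_density s 1 x) * ennreal (a + k * \<bar>x - s\<bar>) = ennreal (?f x)" for x
    using assms by (simp add: ennreal_mult[symmetric] distrib_left mult_ac del: ennreal_plus)
  then have "(\<integral>\<^sup>+x. ennreal (normal_density s 1 x) * ennreal (a + k * \<bar>x - s\<bar>) \<partial>lborel) =
      ennreal (\<integral>x. ?f x \<partial>lborel)"
    using assms by (simp del: ennreal_plus add: nn_integral_eq_integral integrable.intros[OF f])
  then show ?thesis
    by (simp add: has_bochner_integral_integral_eq[OF f])
qed

lemma Tc_normal_le_affine_coupling:
  fixes s t \<sigma> :: real
  assumes \<sigma>: "1 \<le> \<sigma>"
  shows "Tc (density lborel (normal_density s 1)) (density lborel (normal_density t \<sigma>)) \<le>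
    ennreal (1 + \<bar>s - t\<bar> + (\<sigma> - 1) * (2 * std_normal_peak))"
proof -
  define M where "M = density lborel (normal_density s 1)"
  define T where "T = (\<lambda>x. t + \<sigma> * (x - s))"
  have M: "prob_space M" "sets M = sets borel"
    by (simp_all add: M_def prob_space_normal_density)
  have T_measurable[measurable]: "T \<in> borel_measurable borel"
    unfolding T_def by measurable
  have "distr M borel (\<lambda>x. (x, T x)) \<in> couplings M (density lborel (normal_density t \<sigma>))"
    using graph_coupling_in_couplings[OF M T_measurable] distr_normal_density_affine[of \<sigma> s t] \<sigma>
    by (simp add: M_def T_def)
  then have "Tc M (density lborel (normal_density t \<sigma>)) \<le> (\<integral>\<^sup>+x. transport_cost (x, T x) \<partial>M)"
    using Tc_le_coupling_cost nn_integral_distr[OF measurable_graph[OF M(2) T_measurable]] by fastforce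
  also have "\<dots> \<le> (\<integral>\<^sup>+x. ennreal (normal_density s 1 x) * ennreal ((1 + \<bar>s - t\<bar>) + (\<sigma> - 1) * \<bar>x - s\<bar>) \<partial>lborel)"
  proof -
    have "transport_cost (x, T x) \<le> ennreal ((1 + \<bar>s - t\<bar>) + (\<sigma> - 1) * \<bar>x - s\<bar>)" for x
    proof -
      have "x - T x = (s - t) - (\<sigma> - 1) * (x - s)"
        by (simp add: T_def algebra_simps)
      then have "\<bar>x - T x\<bar> \<le> \<bar>s - t\<bar> + (\<sigma> - 1) * \<bar>x - s\<bar>"
        using \<sigma> abs_triangle_ineq4[of "s - t" "(\<sigma> - 1) * (x - s)"] by (simp add: abs_mult)
      then show ?thesis
        unfolding transport_cost_def by (intro ennreal_leI) auto
    qed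
    then show ?thesis
      unfolding M_def by (subst nn_integral_density) (auto intro!: nn_integral_mono mult_left_mono)
  qed
  also have "\<dots> = ennreal (1 + \<bar>s - t\<bar> + (\<sigma> - 1) * (2 * std_normal_peak))"
    by (rule nn_integral_normal_density_affine_abs) (use \<sigma> in auto)
  finally show ?thesis
    by (simp add: M_def)
qed

lemma path_bound_le_double:
  fixes x y p :: real
  assumes "0 \<le> x" "0 \<le> y" "x + y \<le> 1" "0 \<le> p" "p \<le> 41 / 100"
  shows "(1/2 + x/2) * (2 * p * x + 8/3 * p * y) + x + 3 * p * y \<le> 2 * (x + y)"
proof -
  have expand: "(1/2 + x/2) * (2 * p * x + 8/3 * p * y) + x + 3 * p * y =
      x + p * (x + x * x + 13/3 * y + 4/3 * (x * y))"
    by (simp add: field_simps)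
  have "x * x \<le> x * (1 - y)" "x * y \<le> 1 * y"
    using assms by (intro mult_left_mono mult_right_mono; simp)+
  then have "x + x * x + 13/3 * y + 4/3 * (x * y) \<le> 2 * x + 14/3 * y"
    by (simp add: algebra_simps)
  moreover have "0 \<le> x + x * x + 13/3 * y + 4/3 * (x * y)"
    using assms by simp
  ultimately have "p * (x + x * x + 13/3 * y + 4/3 * (x * y)) \<le> 41/100 * (2 * x + 14/3 * y)"
    using assms by (intro mult_mono) auto
  then show ?thesis
    unfolding expand using assms by simp
qed

theorem lemma2p2:
  fixes s t b :: real
  assumes "b \<ge> 0"
  shows "Tc (gauss s 0) (gauss t b) \<le> ennreal (2 * (\<bar>s - t\<bar> + exp b - 1))"
proof -
  define \<sigma> where "\<sigma> = exp b"
  have \<sigma>: "1 \<le> \<sigma>"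
    using assms by (simp add: \<sigma>_def)
  have gauss: "gauss s 0 = density lborel (normal_density s 1)" "gauss t b = density lborel (normal_density t \<sigma>)"
    by (simp_all add: gauss_def \<sigma>_def)
  have p: "0 \<le> std_normal_peak" "2 * std_normal_peak \<le> 1"
    using std_normal_peak_le by (simp, linarith)
  show ?thesis
  proof (cases "1 \<le> \<bar>s - t\<bar> + (\<sigma> - 1)")
    case True
    have "Tc (gauss s 0) (gauss t b) \<le> ennreal (1 + \<bar>s - t\<bar> + (\<sigma> - 1) * (2 * std_normal_peak))"
      unfolding gauss by (rule Tc_normal_le_affine_coupling[OF \<sigma>])
    also have "\<dots> \<le> ennreal (2 * (\<bar>s - t\<bar> + exp b - 1))"
      using True \<sigma> p mult_left_mono[of "2 * std_normal_peak" 1 "\<sigma> - 1"]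
      by (intro ennreal_leI) (simp add: \<sigma>_def)
    finally show ?thesis .
  next
    case False
    have "Tc (gauss s 0) (gauss t b) \<le>
        (\<integral>\<^sup>+x. ennreal ((1/2 + \<bar>x - t\<bar>) * \<bar>normal_density t \<sigma> x - normal_density s 1 x\<bar>) \<partial>lborel)"
      unfolding gauss using \<sigma> by (intro Tc_density_le_weighted_L1) (simp_all add: nn_integral_eq_integral)
    also have "\<dots> \<le> ennreal ((1/2 + \<bar>s - t\<bar>/2) * (2 * std_normal_peak * \<bar>s - t\<bar> + 8/3 * std_normal_peak * (\<sigma> - 1)) +
        \<bar>s - t\<bar> + 3 * std_normal_peak * (\<sigma> - 1))"
      by (rule nn_integral_weighted_normal_density_diff_le[OF \<sigma>])
    also have "\<dots> \<le> ennreal (2 * (\<bar>s - t\<bar> + exp b - 1))"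
      using path_bound_le_double[of "\<bar>s - t\<bar>" "\<sigma> - 1" std_normal_peak] False \<sigma> p std_normal_peak_le
      by (intro ennreal_leI) (simp add: \<sigma>_def)
    finally show ?thesis .
  qed
qed

end
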